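(* For $a\in\mathfrak z$ and $w\in\mathfrak{H}^1$: (i) $S_\hbar^t(a\circ_+w)=a\circ_+S_\hbar^t(w)$; (ii) $S_\hbar^t(wy)=\gamma_\hbar^t(w)\,y$, where $\gamma_\hbar^t$ is the algebra automorphism of $\mathfrak{H}$ with $\gamma_\hbar^t(x)=x$ and $\gamma_\hbar^t(y)=tx+y+\hbar t$.
   Context: Let $\hbar,t$ be formal variables and $\mathfrak{H}=\mathbb{Q}[\hbar,t]\langle x,y\rangle$ the noncommutative polynomial algebra over $\mathbb{Q}[\hbar,t]$; put $\mathfrak{H}^1=\mathbb{Q}[\hbar,t]+\mathfrak{H}y$ and $z_j=x^{j-1}y$ ($j\ge1$). Let $\mathfrak z$ be the $\mathbb{Q}[\hbar,t]$-submodule spanned by $\{z_j\}_{j\ge1}$, with the $\mathbb{Q}[\hbar,t]$-bilinear product $z_i\circ_+ z_j=z_{i+j}+\hbar z_{i+j-1}$, extended to an action of $\mathfrak z$ on $\mathfrak{H}^1$ by $z_i\circ_+1=0$, $z_i\circ_+(z_jw)=(z_i\circ_+z_j)w$ ($w\in\mathfrak{H}^1$). Let $S_\hbar^t:\mathfrak{H}^1\to\mathfrak{H}^1$ be the $\mathbb{Q}[\hbar,t]$-linear map with $S_\hbar^t(1)=1$ and $S_\hbar^t(z_kw)=z_kS_\hbar^t(w)+t\,z_k\circ_+S_\hbar^t(w)$ for $k\ge1$ and words $w\in\mathfrak{H}^1$. *)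

theory Defs
  imports "HOL-Library.Poly_Mapping" "HOL-Computational_Algebra.Polynomial"
begin

text \<open>Coefficient ring Q[hbar,t], realised as (Q[hbar])[t] = rat poly poly.\<close>
type_synonym coeff = "rat poly poly"

definition tt :: coeff where "tt = [:0, 1:]"
definition hb :: coeff where "hb = [:[:0, 1:]:]"

datatype letter = X | Y
type_synonym word = "letter list"

text \<open>The noncommutative polynomial algebra H = Q[hbar,t]<x,y>: finitely supported
  coefficient functions on words.\<close>
type_synonym H = "word \<Rightarrow>\<^sub>0 coeff"

definition mon :: "word \<Rightarrow> H" where "mon u = Poly_Mapping.single u 1"
definition hone :: H where "hone = mon []"
definition hx :: H where "hx = mon [X]"
definition hy :: H where "hy = mon [Y]"

definition scal :: "coeff \<Rightarrow> H \<Rightarrow> H" where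
  "scal c p = Poly_Mapping.map (\<lambda>a. c * a) p"

definition cst :: "coeff \<Rightarrow> H" where "cst c = scal c hone"

definition hmul :: "H \<Rightarrow> H \<Rightarrow> H" where
  "hmul p q = (\<Sum>u\<in>Poly_Mapping.keys p. \<Sum>v\<in>Poly_Mapping.keys q. Poly_Mapping.single (u @ v) (Poly_Mapping.lookup p u * Poly_Mapping.lookup q v))"

definition lin :: "(word \<Rightarrow> H) \<Rightarrow> H \<Rightarrow> H" where
  "lin f p = (\<Sum>u\<in>Poly_Mapping.keys p. scal (Poly_Mapping.lookup p u) (f u))"

text \<open>H^1 = Q[hbar,t] + H y: every word in the support is empty or ends in y.\<close>
definition H1 :: "H set" where
  "H1 = {p. \<forall>u\<in>Poly_Mapping.keys p. u = [] \<or> last u = Y}"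

definition zw :: "nat \<Rightarrow> word" where "zw j = replicate (j - 1) X @ [Y]"
definition z :: "nat \<Rightarrow> H" where "z j = mon (zw j)"

definition zmod :: "H set" where
  "zmod = {p. \<forall>u\<in>Poly_Mapping.keys p. \<exists>j\<ge>1. u = zw j}"

definition zprod :: "nat \<Rightarrow> nat \<Rightarrow> H" where
  "zprod i j = z (i + j) + scal hb (z (i + j - 1))"

text \<open>Decomposition of a nonempty word u = z_j w (j = number of leading x's + 1).\<close>
definition zidx :: "word \<Rightarrow> nat" where
  "zidx u = length (takeWhile (\<lambda>c. c = X) u) + 1"
definition zrest :: "word \<Rightarrow> word" where
  "zrest u = drop (zidx u) u"

definition zact :: "nat \<Rightarrow> word \<Rightarrow> H" where
  "zact i u = (if u = [] then 0 else hmul (zprod i (zidx u)) (mon (zrest u)))"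

text \<open>Bilinear extension: a o+ p for a in zmod and p in H^1
  (a word of zmod of the form x^(i-1) y has i = its length).\<close>
definition circ :: "H \<Rightarrow> H \<Rightarrow> H" where
  "circ a p = lin (\<lambda>v. lin (zact (length v)) p) a"

function Sw :: "word \<Rightarrow> H" where
  "Sw u = (if u = [] then hone
           else hmul (z (zidx u)) (Sw (zrest u)) + scal tt (circ (z (zidx u)) (Sw (zrest u))))"
  by auto
termination
  by (relation "measure length") (auto simp: zrest_def zidx_def)

definition S :: "H \<Rightarrow> H" where "S = lin Sw"

fun gw :: "word \<Rightarrow> H" where
  "gw [] = hone"
| "gw (X # u) = hmul hx (gw u)"
| "gw (Y # u) = hmul (scal tt hx + hy + cst (hb * tt)) (gw u)"

definition gamma :: "H \<Rightarrow> H" where "gamma = lin gw"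

end

theory Submission
  imports Defs
begin

text \<open>
  For (i) it suffices, by linearity, to take a = z_i and w = z_k u, so that
  z_i o+ w = z_(i+k) u + hbar z_(i+k-1) u. Expanding S(z_i o+ w) and S(w) by the
  recursion for S, the two sides agree by the rules
  z_i o+ (z_k p) = (z_i o+ z_k) p  and  z_i o+ (z_k o+ p) = z_(i+k) o+ p + hbar z_(i+k-1) o+ p.
  For (ii), on H y the operator z_i o+ is left multiplication by x^i + hbar x^(i-1), so
  S(x^(k-1) y u y) = x^(k-1) (y + t x + hbar t) S(u y) = gamma(x^(k-1) y) S(u y),
  and induction on u finishes.
\<close>

lemma lookup_scal [simp]: "Poly_Mapping.lookup (scal c p) k = c * Poly_Mapping.lookup p k"
  unfolding scal_def by transfer (simp add: when_def)

lemma scal_add [simp]: "scal c (p + q) = scal c p + scal c q"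
  by (rule poly_mapping_eqI) (simp add: lookup_add algebra_simps)

lemma scal_add_left: "scal (c + d) p = scal c p + scal d p"
  by (rule poly_mapping_eqI) (simp add: lookup_add algebra_simps)

lemma scal_scal [simp]: "scal c (scal d p) = scal (c * d) p"
  by (rule poly_mapping_eqI) (simp add: algebra_simps)

lemma scal_one [simp]: "scal 1 p = p"
  by (rule poly_mapping_eqI) simp

lemma scal_zero_left [simp]: "scal 0 p = 0"
  by (rule poly_mapping_eqI) simp

lemma scal_zero [simp]: "scal c 0 = 0"
  by (rule poly_mapping_eqI) simp

lemma scal_sum: "scal c (sum f A) = (\<Sum>x\<in>A. scal c (f x))"
  by (induction A rule: infinite_finite_induct) auto

lemma scal_single: "scal c (Poly_Mapping.single u d) = Poly_Mapping.single u (c * d)"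
  by (rule poly_mapping_eqI) (simp add: lookup_single when_def)

lemma keys_scal: "Poly_Mapping.keys (scal c p) \<subseteq> Poly_Mapping.keys p"
  by (auto simp: in_keys_iff)

lemma lin_superset:
  assumes "finite A" "Poly_Mapping.keys p \<subseteq> A"
  shows "lin f p = (\<Sum>u\<in>A. scal (Poly_Mapping.lookup p u) (f u))"
  unfolding lin_def using assms
  by (intro sum.mono_neutral_left) (auto simp: in_keys_iff)

lemma lin_add [simp]: "lin f (p + q) = lin f p + lin f q"
proof -
  let ?A = "Poly_Mapping.keys p \<union> Poly_Mapping.keys q"
  have "lin f (p + q) = (\<Sum>u\<in>?A. scal (Poly_Mapping.lookup (p + q) u) (f u))"
    by (rule lin_superset) (auto simp: keys_add)
  also have "\<dots> = (\<Sum>u\<in>?A. scal (Poly_Mapping.lookup p u) (f u))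
                + (\<Sum>u\<in>?A. scal (Poly_Mapping.lookup q u) (f u))"
    by (simp add: lookup_add scal_add_left sum.distrib)
  also have "\<dots> = lin f p + lin f q"
    by (subst (1 2) lin_superset[symmetric]) auto
  finally show ?thesis .
qed

lemma lin_scal [simp]: "lin f (scal c p) = scal c (lin f p)"
proof -
  have "lin f (scal c p) = (\<Sum>u\<in>Poly_Mapping.keys p. scal (Poly_Mapping.lookup (scal c p) u) (f u))"
    by (rule lin_superset) (auto simp: keys_scal)
  then show ?thesis
    by (simp add: lin_def scal_sum)
qed

lemma lin_zero [simp]: "lin f 0 = 0"
  by (simp add: lin_def)

lemma lin_single [simp]: "lin f (Poly_Mapping.single u c) = scal c (f u)"
  by (subst lin_superset[of "{u}"]) auto

lemma lin_mon [simp]: "lin f (mon u) = f u"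
  by (simp add: mon_def)

lemma lin_sum: "lin f (sum g A) = (\<Sum>x\<in>A. lin f (g x))"
  by (induction A rule: infinite_finite_induct) auto

lemma lin_fun_add: "lin (\<lambda>u. f u + g u) p = lin f p + lin g p"
  by (simp add: lin_def sum.distrib)

lemma lin_fun_scal: "lin (\<lambda>u. scal c (f u)) p = scal c (lin f p)"
  by (simp add: lin_def scal_sum mult.commute)

lemma lin_cong: "(\<And>u. u \<in> Poly_Mapping.keys p \<Longrightarrow> f u = g u) \<Longrightarrow> lin f p = lin g p"
  by (simp add: lin_def)

lemma lin_lin: "lin g (lin f p) = lin (\<lambda>u. lin g (f u)) p"
proof -
  have "lin g (lin f p) = (\<Sum>u\<in>Poly_Mapping.keys p. scal (Poly_Mapping.lookup p u) (lin g (f u)))"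
    by (simp only: lin_def[of f p] lin_sum lin_scal)
  then show ?thesis
    by (simp add: lin_def[of "\<lambda>u. lin g (f u)" p])
qed

lemma lin_swap: "lin (\<lambda>u. lin (\<lambda>v. F u v) q) p = lin (\<lambda>v. lin (\<lambda>u. F u v) p) q"
  by (simp add: lin_def scal_sum sum.swap[of _ "Poly_Mapping.keys p"] mult.commute)

lemma lin_mon_id: "lin mon p = p"
proof -
  have lookup_partial_sum: "finite I \<Longrightarrow>
      Poly_Mapping.lookup (\<Sum>i\<in>I. scal (Poly_Mapping.lookup p i) (mon i)) j
      = (if j \<in> I then Poly_Mapping.lookup p j else 0)" for I j
    by (induction I rule: finite_induct) (auto simp: mon_def lookup_single lookup_add when_def)
  show ?thesis
    unfolding lin_def by (rule poly_mapping_eqI) (fastforce simp: in_keys_iff lookup_partial_sum)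
qed

lemma hmul_lin: "hmul p q = lin (\<lambda>u. lin (\<lambda>v. mon (u @ v)) q) p"
  by (simp add: hmul_def lin_def scal_sum mon_def scal_single mult.commute)

lemma hmul_lin_left: "hmul (lin f p) q = lin (\<lambda>u. hmul (f u) q) p"
  by (simp add: hmul_lin[of _ q] lin_lin)

lemma hmul_lin_right: "hmul p (lin f q) = lin (\<lambda>v. hmul p (f v)) q"
  by (simp add: hmul_lin[of p] lin_lin lin_swap[of _ q p])

lemma hmul_add_left [simp]: "hmul (p + p') q = hmul p q + hmul p' q"
  by (simp add: hmul_lin[of _ q])

lemma hmul_add_right [simp]: "hmul p (q + q') = hmul p q + hmul p q'"
  by (simp add: hmul_lin[of p] lin_fun_add)

lemma hmul_scal_left [simp]: "hmul (scal c p) q = scal c (hmul p q)"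
  by (simp add: hmul_lin[of _ q])

lemma hmul_scal_right [simp]: "hmul p (scal c q) = scal c (hmul p q)"
  by (simp add: hmul_lin[of p] lin_fun_scal)

lemma hmul_mon_mon [simp]: "hmul (mon u) (mon v) = mon (u @ v)"
  by (simp add: hmul_lin)

lemma hmul_expand_left: "hmul p q = lin (\<lambda>u. hmul (mon u) q) p"
  using hmul_lin_left[of mon p q] by (simp add: lin_mon_id)

lemma hmul_expand_right: "hmul p q = lin (\<lambda>v. hmul p (mon v)) q"
  using hmul_lin_right[of p mon q] by (simp add: lin_mon_id)

lemma hmul_mon_hmul_mon [simp]: "hmul (mon u) (hmul (mon v) r) = hmul (mon (u @ v)) r"
  by (subst (1 2 3) hmul_expand_right) (simp add: hmul_lin_right)

lemma hmul_assoc: "hmul (hmul p q) r = hmul p (hmul q r)"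
proof -
  have "hmul (hmul p q) r = lin (\<lambda>u. lin (\<lambda>v. hmul (mon (u @ v)) r) q) p"
    by (subst hmul_expand_left[of p q]) (simp add: hmul_lin_left hmul_expand_right[of "mon _" q])
  also have "\<dots> = hmul p (hmul q r)"
    by (subst hmul_expand_left[of p]) (simp add: hmul_expand_left[of q r] hmul_lin_right)
  finally show ?thesis .
qed

lemma hmul_hone_left [simp]: "hmul hone q = q"
  by (subst hmul_expand_right) (simp add: hone_def lin_mon_id)

lemma hmul_hone_right [simp]: "hmul p hone = p"
  by (subst hmul_expand_left) (simp add: hone_def lin_mon_id)

lemma hmul_hy_lin: "hmul p hy = lin (\<lambda>u. mon (u @ [Y])) p"
  by (subst hmul_expand_left) (simp add: hy_def)

lemma hmul_z_lin: "hmul (z k) p = lin (\<lambda>v. mon (zw k @ v)) p"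
  by (subst hmul_expand_right) (simp add: z_def)

lemma words_cases_leading_X:
  obtains m where "u = replicate m X"
  | m r where "u = replicate m X @ Y # r"
proof (induction u arbitrary: thesis)
  case Nil
  then show ?case by (metis replicate_0)
next
  case (Cons c u)
  show ?case
  proof (cases c)
    case X
    show ?thesis
    proof (rule Cons.IH)
      show "u = replicate m X \<Longrightarrow> thesis" for m
        using Cons.prems(1)[of "Suc m"] X by simp
      show "u = replicate m X @ Y # r \<Longrightarrow> thesis" for m r
        using Cons.prems(2)[of "Suc m" r] X by simp
    qed
  next
    case Y
    then show ?thesis
      using Cons.prems(2)[of 0 u] by simp
  qed
qed

lemma takeWhile_X_replicate: "takeWhile (\<lambda>c. c = X) (replicate m X @ Y # r) = replicate m X"
  by (induction m) auto

lemma zw_append: "j \<ge> 1 \<Longrightarrow> zw j @ r = replicate (j - 1) X @ Y # r"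
  by (simp add: zw_def)

lemma length_zw [simp]: "j \<ge> 1 \<Longrightarrow> length (zw j) = j"
  by (simp add: zw_def)

lemma zidx_zw_append: "j \<ge> 1 \<Longrightarrow> zidx (zw j @ r) = j"
  by (simp add: zw_append zidx_def takeWhile_X_replicate)

lemma zrest_zw_append: "j \<ge> 1 \<Longrightarrow> zrest (zw j @ r) = r"
  by (simp add: zrest_def zidx_zw_append)

lemma zidx_ge_1: "zidx u \<ge> 1"
  by (simp add: zidx_def)

lemma circ_z: "j \<ge> 1 \<Longrightarrow> circ (z j) p = lin (zact j) p"
  by (simp add: circ_def z_def)

declare Sw.simps [simp del] \<comment> \<open>its right-hand side contains Sw u again and would loop\<close>

lemma Sw_Nil [simp]: "Sw [] = hone"
  by (subst Sw.simps) simp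

lemma Sw_nonempty:
  "u \<noteq> [] \<Longrightarrow> Sw u = hmul (z (zidx u)) (Sw (zrest u)) + scal tt (lin (zact (zidx u)) (Sw (zrest u)))"
  by (subst Sw.simps) (simp add: circ_z[OF zidx_ge_1])

lemma Sw_zw_append:
  assumes "j \<ge> 1"
  shows "Sw (zw j @ r) = hmul (z j) (Sw r) + scal tt (lin (zact j) (Sw r))"
proof -
  have "zw j @ r \<noteq> []"
    by (simp add: zw_def)
  then show ?thesis
    using assms by (simp add: Sw_nonempty zidx_zw_append zrest_zw_append)
qed

lemma zact_Nil [simp]: "zact i [] = 0"
  by (simp add: zact_def)

lemma zact_zw_append: "j \<ge> 1 \<Longrightarrow> zact i (zw j @ v) = hmul (zprod i j) (mon v)"
  by (simp add: zact_def zidx_zw_append zrest_zw_append) (simp add: zw_def)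

lemma hmul_zprod_mon:
  "hmul (zprod i j) (mon r) = mon (zw (i + j) @ r) + scal hb (mon (zw (i + j - 1) @ r))"
  by (simp add: zprod_def z_def)

lemma lin_zact_hmul_z: "k \<ge> 1 \<Longrightarrow> lin (zact i) (hmul (z k) p) = hmul (zprod i k) p"
  by (simp add: hmul_z_lin lin_lin zact_zw_append hmul_expand_right[of _ p])

lemma lin_zact_lin_zact:
  assumes i: "i \<ge> 1" and k: "k \<ge> 1"
  shows "lin (zact i) (lin (zact k) p) = lin (zact (i + k)) p + scal hb (lin (zact (i + k - 1)) p)"
proof -
  have "lin (zact i) (zact k v) = zact (i + k) v + scal hb (zact (i + k - 1) v)" for v
  proof (cases "v = []")
    case True
    then show ?thesis by simp
  next
    case False
    define j r where "j = zidx v" and "r = zrest v"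
    have j: "j \<ge> 1"
      unfolding j_def by (rule zidx_ge_1)
    have zact_v: "zact l v = hmul (zprod l j) (mon r)" for l
      using False by (simp add: zact_def j_def r_def)
    have "lin (zact i) (zact k v)
        = hmul (zprod i (k + j)) (mon r) + scal hb (hmul (zprod i (k + j - 1)) (mon r))"
      using k j by (simp add: zact_v hmul_zprod_mon zact_zw_append)
    also have "\<dots> = zact (i + k) v + scal hb (zact (i + k - 1) v)"
      using i k j by (simp add: zact_v hmul_zprod_mon add_ac)
    finally show ?thesis .
  qed
  then show ?thesis
    by (simp add: lin_lin lin_fun_add[symmetric] lin_fun_scal[symmetric])
qed

lemma S_zact: "i \<ge> 1 \<Longrightarrow> S (zact i u) = lin (zact i) (Sw u)"
proof (cases "u = []")
  case True
  then show ?thesis by (simp add: S_def hone_def)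
next
  case False
  assume i: "i \<ge> 1"
  define k r where "k = zidx u" and "r = zrest u"
  have k: "k \<ge> 1"
    unfolding k_def by (rule zidx_ge_1)
  have Sw_u: "Sw u = hmul (z k) (Sw r) + scal tt (lin (zact k) (Sw r))"
    using False by (simp add: Sw_nonempty k_def r_def)
  have "S (zact i u) = Sw (zw (i + k) @ r) + scal hb (Sw (zw (i + k - 1) @ r))"
    using False by (simp add: zact_def hmul_zprod_mon S_def k_def r_def)
  also have "\<dots> = lin (zact i) (Sw u)"
    using i k
    by (simp add: Sw_zw_append Sw_u lin_zact_hmul_z lin_zact_lin_zact zprod_def add_ac mult_ac)
  finally show ?thesis .
qed

lemma S_circ:
  assumes "a \<in> zmod"
  shows "S (circ a p) = circ a (S p)"
proof -
  have "lin (\<lambda>u. S (zact (length v) u)) p = lin (\<lambda>u. lin (zact (length v)) (Sw u)) p"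
    if "v \<in> Poly_Mapping.keys a" for v
  proof -
    from that assms obtain j where "j \<ge> 1" "v = zw j"
      by (auto simp: zmod_def)
    then show ?thesis
      by (simp add: S_zact)
  qed
  then show ?thesis
    unfolding circ_def S_def lin_lin by (rule lin_cong) simp
qed

lemma gw_replicate_X_append: "gw (replicate m X @ v) = hmul (mon (replicate m X)) (gw v)"
  by (induction m) (simp_all add: hone_def[symmetric] hx_def hmul_assoc[symmetric])

lemma zact_snoc_Y:
  assumes i: "i \<ge> 1"
  shows "zact i (v @ [Y]) = hmul (mon (replicate i X) + scal hb (mon (replicate (i - 1) X))) (mon (v @ [Y]))"
proof -
  obtain m r where v_Y: "v @ [Y] = zw (Suc m) @ r"
    by (cases v rule: words_cases_leading_X) (auto simp: zw_def)
  obtain c where "i = Suc c"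
    using i by (cases i) auto
  with v_Y show ?thesis
    by (simp add: zact_zw_append hmul_zprod_mon) (simp add: zw_def replicate_add)
qed

lemma lin_zact_hmul_hy:
  "i \<ge> 1 \<Longrightarrow> lin (zact i) (hmul q hy)
     = hmul (mon (replicate i X) + scal hb (mon (replicate (i - 1) X))) (hmul q hy)"
  by (simp add: hmul_hy_lin lin_lin zact_snoc_Y hmul_lin_right)

lemma Sw_snoc_Y: "Sw (u @ [Y]) = hmul (gw u) hy"
proof (induction "length u" arbitrary: u rule: less_induct)
  case less
  show ?case
  proof (cases u rule: words_cases_leading_X)
    case (1 m)
    have "Sw (u @ [Y]) = Sw (zw (Suc m) @ [])"
      by (simp add: 1 zw_def)
    also have "\<dots> = z (Suc m)"
      by (simp only: Sw_zw_append[of "Suc m"]) (simp add: hone_def z_def)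
    also have "\<dots> = hmul (gw u) hy"
      using gw_replicate_X_append[of m "[]"] by (simp add: 1 z_def hy_def zw_def hone_def)
    finally show ?thesis .
  next
    case (2 m r)
    define G where "G = hmul (gw r) hy"
    have "Sw (r @ [Y]) = G"
      using less by (simp add: 2 G_def)
    moreover have "u @ [Y] = zw (Suc m) @ (r @ [Y])"
      by (simp add: 2 zw_def)
    ultimately have "Sw (u @ [Y]) = hmul (z (Suc m)) G + scal tt (lin (zact (Suc m)) G)"
      by (simp add: Sw_zw_append)
    also have "\<dots> = hmul (z (Suc m)) G
        + scal tt (hmul (mon (replicate (Suc m) X) + scal hb (mon (replicate m X))) G)"
      unfolding G_def by (subst lin_zact_hmul_hy) auto
    also have "\<dots> = hmul (gw u) hy"
      by (simp add: 2 gw_replicate_X_append G_def hmul_assoc z_def zw_def hx_def hy_def cst_def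
          replicate_append_same[symmetric] add_ac mult_ac)
    finally show ?thesis .
  qed
qed

lemma S_hmul_hy: "S (hmul w hy) = hmul (gamma w) hy"
  by (simp add: hmul_hy_lin S_def gamma_def lin_lin hmul_lin_left Sw_snoc_Y)

theorem lemma2p1:
  fixes a w :: H
  assumes "a \<in> zmod" and "w \<in> H1"
  shows "S (circ a w) = circ a (S w) \<and> S (hmul w hy) = hmul (gamma w) hy"
  using S_circ[OF assms(1)] S_hmul_hy by blast

end
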